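(* Let $(X,d)$ be a finite metric space, $X=\{1,\dots,n\}$, and let $\alpha$ be an action of a compact quantum group $\mathcal{Q}$ on $C(X)$, written $\alpha(\delta_i)=\sum_{j}\delta_j\otimes q_{ij}$. The following are equivalent: (i) $\sum_{i\in X}d_{il}\,q_{ki}=\sum_{i\in X}d_{ki}\,q_{il}$ for all $k,l\in X$ (Banica's condition); (ii) $\alpha^{(2)}(d)=d\otimes1$, where $d=\sum_{i,j}d_{ij}\,\delta_i\otimes\delta_j\in C(X\times X)$; (iii) $\alpha^{(2)}(c)=c\otimes1$, where $c=\sum_{i\ne j}d_{ij}^{-2}\,\delta_i\otimes\delta_j$; (iv) $(\mathcal{L}\otimes\mathrm{id})\circ\alpha=\alpha\circ\mathcal{L}$, where $\mathcal{L}$ is the Laplacian of the spectral triple $(C(X),\mathsf{H},D)$.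
   Context: $d_{ij}=d(i,j)$ and $\delta_i$ is the indicator of $i$. $\alpha^{(2)}:C(X)\otimes C(X)\to C(X)\otimes C(X)\otimes\mathcal{Q}$ is defined by $\alpha^{(2)}(f\otimes g)=\sum_{k,l}f_k\otimes g_l\otimes x_ky_l$ when $\alpha(f)=\sum_kf_k\otimes x_k$, $\alpha(g)=\sum_lg_l\otimes y_l$ (extended linearly). Spectral triple: $Y=\{(x,y)\in X\times X:x\neq y\}$, $s(x,y)=x$, $t(x,y)=y$; $\mathsf{H}=\mathbb{C}^2\otimes\ell^2(Y)$, $D=\begin{pmatrix}0&i\\-i&0\end{pmatrix}\otimes M_{d^{-1}}$, $\pi(f)=\begin{pmatrix}1&0\\0&0\end{pmatrix}\otimes M_{f\circ s}+\begin{pmatrix}0&0\\0&1\end{pmatrix}\otimes M_{f\circ t}$. Laplacian: $\mathsf{H}_0=C(X)$ with inner product $\mathrm{Tr}(\pi(f)^*\pi(g))$, $d_D(f)=[D,\pi(f)]$ into Hilbert–Schmidt operators on $\mathsf{H}$, $\mathcal{L}=-d_D^*d_D$; explicitly $\mathcal{L}(f)(i)=\kappa\sum_{j\ne i}d_{ij}^{-2}(f(j)-f(i))$ for a positive constant $\kappa$ depending only on $n$. *)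

theory Defs
  imports Main "HOL.Real_Vector_Spaces"
begin

definition finite_metric :: "('x::finite \<Rightarrow> 'x \<Rightarrow> real) \<Rightarrow> bool" where
  "finite_metric d \<longleftrightarrow>
     (\<forall>i. d i i = 0) \<and> (\<forall>i j. i \<noteq> j \<longrightarrow> d i j > 0) \<and>
     (\<forall>i j. d i j = d j i) \<and> (\<forall>i j k. d i k \<le> d i j + d j k)"

text \<open>Coefficient matrix of an action of a compact quantum group on C(X):
  alpha(delta_i) = sum_j delta_j (x) q i j.  By Wang's theorem this is exactly a
  magic unitary (projections, orthogonal along rows and columns, row and column
  sums equal to 1); Q is modelled as a unital real algebra.\<close>
definition magic_unitary :: "('x::finite \<Rightarrow> 'x \<Rightarrow> 'q::real_algebra_1) \<Rightarrow> bool" where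
  "magic_unitary q \<longleftrightarrow>
     (\<forall>i j. q i j * q i j = q i j) \<and>
     (\<forall>i j k. j \<noteq> k \<longrightarrow> q i j * q i k = 0) \<and>
     (\<forall>i j k. i \<noteq> k \<longrightarrow> q i j * q k j = 0) \<and>
     (\<forall>i. (\<Sum>j\<in>UNIV. q i j) = 1) \<and>
     (\<forall>j. (\<Sum>i\<in>UNIV. q i j) = 1)"

text \<open>The action alpha : C(X) -> C(X) (x) Q, with C(X) (x) Q identified with X -> Q:
  alpha f = sum_i f(i) sum_j delta_j (x) q i j.\<close>
definition act :: "('x::finite \<Rightarrow> 'x \<Rightarrow> 'q::real_algebra_1) \<Rightarrow> ('x \<Rightarrow> real) \<Rightarrow> ('x \<Rightarrow> 'q)" where
  "act q f = (\<lambda>j. \<Sum>i\<in>UNIV. f i *\<^sub>R q i j)"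

text \<open>alpha^(2) : C(X) (x) C(X) -> C(X) (x) C(X) (x) Q, with C(X x X) (x) Q identified
  with X x X -> Q: alpha2(delta_i (x) delta_j) = sum_{k,l} delta_k (x) delta_l (x) q i k * q j l.\<close>
definition act2 :: "('x::finite \<Rightarrow> 'x \<Rightarrow> 'q::real_algebra_1) \<Rightarrow> ('x \<times> 'x \<Rightarrow> real) \<Rightarrow> ('x \<times> 'x \<Rightarrow> 'q)" where
  "act2 q F = (\<lambda>(k, l). \<Sum>i\<in>UNIV. \<Sum>j\<in>UNIV. F (i, j) *\<^sub>R (q i k * q j l))"

definition banica_cond :: "('x::finite \<Rightarrow> 'x \<Rightarrow> real) \<Rightarrow> ('x \<Rightarrow> 'x \<Rightarrow> 'q::real_algebra_1) \<Rightarrow> bool" where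
  "banica_cond d q \<longleftrightarrow>
     (\<forall>k l. (\<Sum>i\<in>UNIV. d i l *\<^sub>R q k i) = (\<Sum>i\<in>UNIV. d k i *\<^sub>R q i l))"

definition dist_fun :: "('x \<Rightarrow> 'x \<Rightarrow> real) \<Rightarrow> ('x \<times> 'x \<Rightarrow> real)" where
  "dist_fun d = (\<lambda>(i, j). d i j)"

definition cfun :: "('x \<Rightarrow> 'x \<Rightarrow> real) \<Rightarrow> ('x \<times> 'x \<Rightarrow> real)" where
  "cfun d = (\<lambda>(i, j). if i \<noteq> j then 1 / (d i j)\<^sup>2 else 0)"

definition tens_one :: "('x \<times> 'x \<Rightarrow> real) \<Rightarrow> ('x \<times> 'x \<Rightarrow> 'q::real_algebra_1)" where
  "tens_one F = (\<lambda>p. of_real (F p))"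

text \<open>Laplacian of the spectral triple, explicitly
  L(f)(i) = kappa * sum_{j ~= i} d_ij^{-2} (f j - f i), and L (x) id on C(X) (x) Q = X -> Q.\<close>
definition laplacian :: "real \<Rightarrow> ('x::finite \<Rightarrow> 'x \<Rightarrow> real) \<Rightarrow> ('x \<Rightarrow> real) \<Rightarrow> ('x \<Rightarrow> real)" where
  "laplacian \<kappa> d f = (\<lambda>i. \<kappa> * (\<Sum>j\<in>UNIV - {i}. (1 / (d i j)\<^sup>2) * (f j - f i)))"

definition laplacian_id :: "real \<Rightarrow> ('x::finite \<Rightarrow> 'x \<Rightarrow> real) \<Rightarrow> ('x \<Rightarrow> 'q::real_algebra_1) \<Rightarrow> ('x \<Rightarrow> 'q)" where
  "laplacian_id \<kappa> d F = (\<lambda>i. \<kappa> *\<^sub>R (\<Sum>j\<in>UNIV - {i}. (1 / (d i j)\<^sup>2) *\<^sub>R (F j - F i)))"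

end

theory Submission
  imports Defs
begin

text \<open>Each of the four conditions says that the magic unitary q never moves a pair (a, b) of
  points to a pair (k, l) at a different distance, i.e. q a k * q b l = 0 whenever
  d a b \<noteq> d k l. For (i) and (ii) this is seen by multiplying the identity by q a k on the left
  and by q b l on the right, which by orthogonality of the projections picks out a single term;
  the converse uses that rows and columns of q sum to 1. Condition (iii) is the same statement
  for the weights d^-2, which determine d. For (iv), testing the intertwining relation on
  indicator functions gives a relation between q L and L q which, after multiplying by the
  projection q i m, splits into Banica's condition for d^-2 and an equality of degrees.\<close>

context
  fixes q :: "'x::finite \<Rightarrow> 'x \<Rightarrow> 'q::real_algebra_1"
  assumes magic: "magic_unitary q"
begin

lemma magic_unitary_row_sum: "(\<Sum>j\<in>UNIV. q i j) = 1"
  using magic unfolding magic_unitary_def by auto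

lemma magic_unitary_col_sum: "(\<Sum>i\<in>UNIV. q i j) = 1"
  using magic unfolding magic_unitary_def by auto

lemma magic_unitary_idem: "q i j * q i j = q i j"
  using magic unfolding magic_unitary_def by auto

lemma magic_unitary_mult_row_sum:
  "q a k * (\<Sum>j\<in>UNIV. c j *\<^sub>R q a j) = c k *\<^sub>R q a k"
proof -
  have "q a k * (c j *\<^sub>R q a j) = (if j = k then c k *\<^sub>R q a k else 0)" for j
    using magic unfolding magic_unitary_def by auto
  then show ?thesis by (simp add: sum_distrib_left)
qed

lemma magic_unitary_mult_col_sum_left:
  "q a k * (\<Sum>i\<in>UNIV. c i *\<^sub>R q i k) = c a *\<^sub>R q a k"
proof -
  have "q a k * (c i *\<^sub>R q i k) = (if i = a then c a *\<^sub>R q a k else 0)" for i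
    using magic unfolding magic_unitary_def by auto
  then show ?thesis by (simp add: sum_distrib_left)
qed

lemma magic_unitary_mult_col_sum_right:
  "(\<Sum>i\<in>UNIV. c i *\<^sub>R q i l) * q b l = c b *\<^sub>R q b l"
proof -
  have "(c i *\<^sub>R q i l) * q b l = (if i = b then c b *\<^sub>R q b l else 0)" for i
    using magic unfolding magic_unitary_def by auto
  then show ?thesis by (simp add: sum_distrib_right)
qed

end

text \<open>q a k * q b l is the coefficient of \<delta>_k \<otimes> \<delta>_l in \<alpha>^(2)(\<delta>_a \<otimes> \<delta>_b).\<close>
definition preserves :: "('x \<Rightarrow> 'x \<Rightarrow> real) \<Rightarrow> ('x \<Rightarrow> 'x \<Rightarrow> 'q::real_algebra_1) \<Rightarrow> bool" where
  "preserves M q \<longleftrightarrow> (\<forall>a b k l. M a b \<noteq> M k l \<longrightarrow> q a k * q b l = 0)"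

lemma preserves_scaleR:
  assumes "preserves M q"
  shows "M a b *\<^sub>R (q a k * q b l) = M k l *\<^sub>R (q a k * q b l)"
  using assms unfolding preserves_def by (cases "M a b = M k l") auto

lemma preservesI_scaleR:
  assumes "\<And>a b k l. M a b *\<^sub>R (q a k * q b l) = M k l *\<^sub>R (q a k * q b l)"
  shows "preserves M q"
  using assms unfolding preserves_def by (metis scaleR_cancel_right)

lemma preserves_comp:
  assumes "inj_on g S" and "\<And>i j. M i j \<in> S"
  shows "preserves (\<lambda>i j. g (M i j)) q \<longleftrightarrow> preserves M q"
  using assms unfolding preserves_def by (simp add: inj_on_eq_iff)

lemma preserves_degree:
  fixes q :: "'x::finite \<Rightarrow> 'x \<Rightarrow> 'q::real_algebra_1"
  assumes magic: "magic_unitary q" and pres: "preserves M q"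
  shows "(\<Sum>j\<in>UNIV. M i j) *\<^sub>R q i m = (\<Sum>j\<in>UNIV. M m j) *\<^sub>R q i m"
proof -
  have "(\<Sum>j\<in>UNIV. M i j) *\<^sub>R q i m = (\<Sum>j\<in>UNIV. M i j *\<^sub>R (q i m * (\<Sum>l\<in>UNIV. q j l)))"
    by (simp add: magic_unitary_row_sum[OF magic] scaleR_sum_left)
  also have "\<dots> = (\<Sum>j\<in>UNIV. \<Sum>l\<in>UNIV. M i j *\<^sub>R (q i m * q j l))"
    by (simp add: sum_distrib_left scaleR_sum_right)
  also have "\<dots> = (\<Sum>j\<in>UNIV. \<Sum>l\<in>UNIV. M m l *\<^sub>R (q i m * q j l))"
    by (intro sum.cong refl) (rule preserves_scaleR[OF pres])
  also have "\<dots> = (\<Sum>l\<in>UNIV. M m l *\<^sub>R (q i m * (\<Sum>j\<in>UNIV. q j l)))"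
    by (subst sum.swap) (simp add: sum_distrib_left scaleR_sum_right)
  also have "\<dots> = (\<Sum>j\<in>UNIV. M m j) *\<^sub>R q i m"
    by (simp add: magic_unitary_col_sum[OF magic] scaleR_sum_left)
  finally show ?thesis .
qed

lemma banica_cond_iff_preserves:
  fixes q :: "'x::finite \<Rightarrow> 'x \<Rightarrow> 'q::real_algebra_1"
  assumes magic: "magic_unitary q"
  shows "banica_cond M q \<longleftrightarrow> preserves M q"
proof
  assume banica: "banica_cond M q"
  show "preserves M q"
  proof (rule preservesI_scaleR)
    fix a b k l
    have "(\<Sum>i\<in>UNIV. M i l *\<^sub>R q a i) = (\<Sum>i\<in>UNIV. M a i *\<^sub>R q i l)"
      using banica unfolding banica_cond_def by blast
    then have "q a k * (\<Sum>i\<in>UNIV. M i l *\<^sub>R q a i) * q b l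
        = q a k * ((\<Sum>i\<in>UNIV. M a i *\<^sub>R q i l) * q b l)"
      by (simp add: mult.assoc)
    then have "M k l *\<^sub>R (q a k * q b l) = M a b *\<^sub>R (q a k * q b l)"
      by (simp add: magic_unitary_mult_row_sum[OF magic] magic_unitary_mult_col_sum_right[OF magic])
    then show "M a b *\<^sub>R (q a k * q b l) = M k l *\<^sub>R (q a k * q b l)" ..
  qed
next
  assume pres: "preserves M q"
  show "banica_cond M q"
    unfolding banica_cond_def
  proof (intro allI)
    fix k l
    have "(\<Sum>i\<in>UNIV. M i l *\<^sub>R q k i) = (\<Sum>i\<in>UNIV. M i l *\<^sub>R (q k i * (\<Sum>j\<in>UNIV. q j l)))"
      by (simp add: magic_unitary_col_sum[OF magic])
    also have "\<dots> = (\<Sum>i\<in>UNIV. \<Sum>j\<in>UNIV. M k j *\<^sub>R (q k i * q j l))"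
      by (simp add: sum_distrib_left scaleR_sum_right preserves_scaleR[OF pres, of k _ _ l])
    also have "\<dots> = (\<Sum>j\<in>UNIV. M k j *\<^sub>R ((\<Sum>i\<in>UNIV. q k i) * q j l))"
      by (subst sum.swap) (simp add: sum_distrib_right scaleR_sum_right)
    also have "\<dots> = (\<Sum>i\<in>UNIV. M k i *\<^sub>R q i l)"
      by (simp add: magic_unitary_row_sum[OF magic])
    finally show "(\<Sum>i\<in>UNIV. M i l *\<^sub>R q k i) = (\<Sum>i\<in>UNIV. M k i *\<^sub>R q i l)" .
  qed
qed

lemma act2_apply:
  "act2 q (\<lambda>(i, j). M i j) (k, l) = (\<Sum>i\<in>UNIV. q i k * (\<Sum>j\<in>UNIV. M i j *\<^sub>R q j l))"
  by (simp add: act2_def sum_distrib_left)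

lemma act2_invariant_iff_preserves:
  fixes q :: "'x::finite \<Rightarrow> 'x \<Rightarrow> 'q::real_algebra_1"
  assumes magic: "magic_unitary q"
  shows "act2 q (\<lambda>(i, j). M i j) = tens_one (\<lambda>(i, j). M i j) \<longleftrightarrow> preserves M q"
proof
  assume inv: "act2 q (\<lambda>(i, j). M i j) = tens_one (\<lambda>(i, j). M i j)"
  show "preserves M q"
  proof (rule preservesI_scaleR)
    fix a b k l
    have "act2 q (\<lambda>(i, j). M i j) (k, l) * q b l
        = (\<Sum>i\<in>UNIV. q i k * ((\<Sum>j\<in>UNIV. M i j *\<^sub>R q j l) * q b l))"
      by (simp add: act2_apply sum_distrib_right mult.assoc)
    also have "\<dots> = (\<Sum>i\<in>UNIV. M i b *\<^sub>R q i k) * q b l"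
      by (simp only: magic_unitary_mult_col_sum_right[OF magic]) (simp add: sum_distrib_right)
    finally have "q a k * (act2 q (\<lambda>(i, j). M i j) (k, l) * q b l) = M a b *\<^sub>R (q a k * q b l)"
      by (simp add: mult.assoc[symmetric] magic_unitary_mult_col_sum_left[OF magic])
    moreover have "act2 q (\<lambda>(i, j). M i j) (k, l) = of_real (M k l)"
      using fun_cong[OF inv, of "(k, l)"] by (simp add: tens_one_def)
    ultimately show "M a b *\<^sub>R (q a k * q b l) = M k l *\<^sub>R (q a k * q b l)"
      by (auto simp add: of_real_def)
  qed
next
  assume pres: "preserves M q"
  show "act2 q (\<lambda>(i, j). M i j) = tens_one (\<lambda>(i, j). M i j)"
  proof (rule ext, clarify)
    fix k l
    have "act2 q (\<lambda>(i, j). M i j) (k, l) = (\<Sum>i\<in>UNIV. \<Sum>j\<in>UNIV. M k l *\<^sub>R (q i k * q j l))"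
      by (simp add: act2_def preserves_scaleR[OF pres])
    also have "\<dots> = M k l *\<^sub>R ((\<Sum>i\<in>UNIV. q i k) * (\<Sum>j\<in>UNIV. q j l))"
      by (simp add: sum_product scaleR_sum_right)
    also have "\<dots> = tens_one (\<lambda>(i, j). M i j) (k, l)"
      by (simp add: magic_unitary_col_sum[OF magic] tens_one_def of_real_def)
    finally show "act2 q (\<lambda>(i, j). M i j) (k, l) = tens_one (\<lambda>(i, j). M i j) (k, l)" .
  qed
qed

definition weighted_laplacian :: "('x::finite \<Rightarrow> 'x \<Rightarrow> real) \<Rightarrow> ('x \<Rightarrow> 'v::real_vector) \<Rightarrow> 'x \<Rightarrow> 'v" where
  "weighted_laplacian W F i = (\<Sum>j\<in>UNIV. W i j *\<^sub>R (F j - F i))"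

lemma act_scale: "act q (\<lambda>i. c * f i) j = c *\<^sub>R act q f j"
  by (simp add: act_def scaleR_sum_right)

lemma sum_indicator_scaleR:
  fixes g :: "'x::finite \<Rightarrow> 'v::real_vector"
  shows "(\<Sum>x\<in>UNIV. (if x = i then 1 else 0) *\<^sub>R g x) = g i"
proof -
  have "(\<Sum>x\<in>UNIV. (if x = i then 1 else 0) *\<^sub>R g x) = (\<Sum>x\<in>UNIV. if x = i then g x else 0)"
    by (intro sum.cong) auto
  then show ?thesis by simp
qed

lemma act_indicator: "act q (\<lambda>x. if x = i then 1 else 0) = q i"
  by (simp add: act_def fun_eq_iff sum_indicator_scaleR)

lemma weighted_laplacian_act:
  "weighted_laplacian W (act q f) m = (\<Sum>i\<in>UNIV. f i *\<^sub>R weighted_laplacian W (q i) m)"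
proof -
  have "weighted_laplacian W (act q f) m = (\<Sum>j\<in>UNIV. \<Sum>i\<in>UNIV. f i *\<^sub>R (W m j *\<^sub>R (q i j - q i m)))"
    by (simp add: weighted_laplacian_def act_def scaleR_sum_right scaleR_right_diff_distrib
        flip: sum_subtractf) (simp add: mult.commute)
  then show ?thesis
    by (subst (asm) sum.swap) (simp add: weighted_laplacian_def scaleR_sum_right)
qed

lemma act_weighted_laplacian:
  "act q (weighted_laplacian W f) m
    = (\<Sum>i\<in>UNIV. f i *\<^sub>R ((\<Sum>j\<in>UNIV. W j i *\<^sub>R q j m) - (\<Sum>j\<in>UNIV. W i j) *\<^sub>R q i m))"
proof -
  have "act q (weighted_laplacian W f) m
      = (\<Sum>j\<in>UNIV. \<Sum>i\<in>UNIV. (W j i * f i) *\<^sub>R q j m) - (\<Sum>i\<in>UNIV. \<Sum>j\<in>UNIV. (W i j * f i) *\<^sub>R q i m)"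
    by (simp add: act_def weighted_laplacian_def right_diff_distrib scaleR_left_diff_distrib
        sum_subtractf scaleR_sum_left sum_distrib_left)
  also have "\<dots> = (\<Sum>i\<in>UNIV. f i *\<^sub>R (\<Sum>j\<in>UNIV. W j i *\<^sub>R q j m)) - (\<Sum>i\<in>UNIV. f i *\<^sub>R ((\<Sum>j\<in>UNIV. W i j) *\<^sub>R q i m))"
    by (subst sum.swap) (simp add: scaleR_sum_right scaleR_sum_left mult.commute)
  finally show ?thesis
    by (simp add: scaleR_right_diff_distrib sum_subtractf)
qed

text \<open>By linearity it suffices to test the intertwining relation on indicator functions.\<close>
lemma act_commutes_weighted_laplacian_iff:
  fixes q :: "'x::finite \<Rightarrow> 'x \<Rightarrow> 'q::real_algebra_1"
  shows "(\<forall>f. weighted_laplacian W (act q f) = act q (weighted_laplacian W f)) \<longleftrightarrow>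
    (\<forall>i m. weighted_laplacian W (q i) m = (\<Sum>j\<in>UNIV. W j i *\<^sub>R q j m) - (\<Sum>j\<in>UNIV. W i j) *\<^sub>R q i m)"
    (is "?commutes \<longleftrightarrow> (\<forall>i m. ?row i m)")
proof
  assume ?commutes
  show "\<forall>i m. ?row i m"
  proof (intro allI)
    fix i m
    have "weighted_laplacian W (act q (\<lambda>x. if x = i then 1 else 0)) m
        = act q (weighted_laplacian W (\<lambda>x. if x = i then 1 else 0)) m"
      using \<open>?commutes\<close> by simp
    then show "?row i m"
      by (simp only: act_indicator act_weighted_laplacian sum_indicator_scaleR)
  qed
next
  assume "\<forall>i m. ?row i m"
  then show ?commutes
    by (simp add: fun_eq_iff weighted_laplacian_act act_weighted_laplacian)
qed

text \<open>Multiplying by the projection q i m kills both products with W, as W vanishes on the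
  diagonal, and leaves the equality of degrees.\<close>
lemma weighted_laplacian_rows_iff_banica_cond:
  fixes q :: "'x::finite \<Rightarrow> 'x \<Rightarrow> 'q::real_algebra_1"
  assumes magic: "magic_unitary q"
    and sym: "\<And>i j. W i j = W j i" and diag: "\<And>i. W i i = 0"
  shows "(\<forall>i m. weighted_laplacian W (q i) m = (\<Sum>j\<in>UNIV. W j i *\<^sub>R q j m) - (\<Sum>j\<in>UNIV. W i j) *\<^sub>R q i m)
    \<longleftrightarrow> banica_cond W q"
proof -
  define A where "A i m = (\<Sum>j\<in>UNIV. W j m *\<^sub>R q i j)" for i m
  define B where "B i m = (\<Sum>j\<in>UNIV. W i j *\<^sub>R q j m)" for i m
  have lap_row: "weighted_laplacian W (q i) m = A i m - (\<Sum>j\<in>UNIV. W m j) *\<^sub>R q i m" for i m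
    by (simp add: weighted_laplacian_def A_def scaleR_right_diff_distrib sum_subtractf
        scaleR_sum_left sym)
  have col: "(\<Sum>j\<in>UNIV. W j i *\<^sub>R q j m) = B i m" for i m
    by (simp add: B_def sym)
  have banica: "banica_cond W q \<longleftrightarrow> (\<forall>i m. A i m = B i m)"
    by (simp add: banica_cond_def A_def B_def)
  show ?thesis
    unfolding lap_row col banica
  proof (intro iffI allI)
    fix i m
    assume rows: "\<forall>i m. A i m - (\<Sum>j\<in>UNIV. W m j) *\<^sub>R q i m = B i m - (\<Sum>j\<in>UNIV. W i j) *\<^sub>R q i m"
    have "q i m * A i m = 0" and "q i m * B i m = 0"
      using magic_unitary_mult_row_sum[OF magic, of i m "\<lambda>j. W j m"]
        magic_unitary_mult_col_sum_left[OF magic, of i m "\<lambda>j. W i j"]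
      by (simp_all add: A_def B_def diag)
    then have "q i m * (A i m - (\<Sum>j\<in>UNIV. W m j) *\<^sub>R q i m) = - ((\<Sum>j\<in>UNIV. W m j) *\<^sub>R q i m)"
      and "q i m * (B i m - (\<Sum>j\<in>UNIV. W i j) *\<^sub>R q i m) = - ((\<Sum>j\<in>UNIV. W i j) *\<^sub>R q i m)"
      by (simp_all add: right_diff_distrib magic_unitary_idem[OF magic])
    then have "(\<Sum>j\<in>UNIV. W m j) *\<^sub>R q i m = (\<Sum>j\<in>UNIV. W i j) *\<^sub>R q i m"
      using rows by (metis neg_equal_iff_equal)
    with rows[rule_format, of i m] show "A i m = B i m"
      by simp
  next
    fix i m
    assume "\<forall>i m. A i m = B i m"
    moreover have "preserves W q"
      using \<open>\<forall>i m. A i m = B i m\<close> banica banica_cond_iff_preserves[OF magic] by blast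
    ultimately show "A i m - (\<Sum>j\<in>UNIV. W m j) *\<^sub>R q i m = B i m - (\<Sum>j\<in>UNIV. W i j) *\<^sub>R q i m"
      using preserves_degree[OF magic, of W i m] by (simp only:)
  qed
qed

text \<open>The excluded diagonal term of the Laplacian vanishes anyway, and inverse 0 = 0.\<close>
lemma laplacian_eq_weighted_laplacian:
  "laplacian \<kappa> d f i = \<kappa> * weighted_laplacian (\<lambda>i j. inverse ((d i j)\<^sup>2)) f i"
proof -
  have "(\<Sum>j\<in>UNIV - {i}. 1 / (d i j)\<^sup>2 * (f j - f i)) = (\<Sum>j\<in>UNIV. inverse ((d i j)\<^sup>2) * (f j - f i))"
    by (rule sum.mono_neutral_cong_left) (auto simp: divide_inverse)
  then show ?thesis
    by (simp add: laplacian_def weighted_laplacian_def)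
qed

lemma laplacian_id_eq_weighted_laplacian:
  "laplacian_id \<kappa> d F i = \<kappa> *\<^sub>R weighted_laplacian (\<lambda>i j. inverse ((d i j)\<^sup>2)) F i"
proof -
  have "(\<Sum>j\<in>UNIV - {i}. (1 / (d i j)\<^sup>2) *\<^sub>R (F j - F i)) = (\<Sum>j\<in>UNIV. inverse ((d i j)\<^sup>2) *\<^sub>R (F j - F i))"
    by (rule sum.mono_neutral_cong_left) (auto simp: divide_inverse)
  then show ?thesis
    by (simp add: laplacian_id_def weighted_laplacian_def)
qed

lemma act_commutes_laplacian_iff:
  fixes q :: "'x::finite \<Rightarrow> 'x \<Rightarrow> 'q::real_algebra_1"
  assumes "\<kappa> \<noteq> 0"
  shows "(\<forall>f. laplacian_id \<kappa> d (act q f) = act q (laplacian \<kappa> d f)) \<longleftrightarrow>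
    (\<forall>f. weighted_laplacian (\<lambda>i j. inverse ((d i j)\<^sup>2)) (act q f)
       = act q (weighted_laplacian (\<lambda>i j. inverse ((d i j)\<^sup>2)) f))"
  using assms
  by (simp add: fun_eq_iff laplacian_id_eq_weighted_laplacian act_scale
      laplacian_eq_weighted_laplacian[abs_def])

lemma cfun_eq_inverse_square:
  assumes "finite_metric d"
  shows "cfun d = (\<lambda>(i, j). inverse ((d i j)\<^sup>2))"
  using assms by (auto simp: cfun_def finite_metric_def fun_eq_iff divide_inverse)

lemma inj_on_inverse_square: "inj_on (\<lambda>t::real. inverse (t\<^sup>2)) {0..}"
  by (rule inj_onI) (simp add: power2_eq_iff_nonneg)

theorem lemma4p2:
  fixes d :: "'x::finite \<Rightarrow> 'x \<Rightarrow> real"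
    and q :: "'x \<Rightarrow> 'x \<Rightarrow> 'q::real_algebra_1"
    and \<kappa> :: real
  assumes "finite_metric d"
    and "magic_unitary q"
    and "\<kappa> > 0"
  shows "(banica_cond d q \<longleftrightarrow> act2 q (dist_fun d) = tens_one (dist_fun d))
       \<and> (act2 q (dist_fun d) = tens_one (dist_fun d) \<longleftrightarrow> act2 q (cfun d) = tens_one (cfun d))
       \<and> (act2 q (cfun d) = tens_one (cfun d) \<longleftrightarrow>
            (\<forall>f. laplacian_id \<kappa> d (act q f) = act q (laplacian \<kappa> d f)))"
proof -
  define W where "W i j = inverse ((d i j)\<^sup>2)" for i j
  have metric: "d i i = 0" "d i j = d j i" "d i j \<ge> 0" for i j
    using assms(1) unfolding finite_metric_def by (metis less_eq_real_def)+
  have W_preserves: "preserves W q \<longleftrightarrow> preserves d q"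
    unfolding W_def by (rule preserves_comp[OF inj_on_inverse_square]) (simp add: metric(3))
  have "(\<forall>f. laplacian_id \<kappa> d (act q f) = act q (laplacian \<kappa> d f))
      \<longleftrightarrow> (\<forall>f. weighted_laplacian W (act q f) = act q (weighted_laplacian W f))"
    unfolding W_def using assms(3) by (intro act_commutes_laplacian_iff) simp
  also have "\<dots> \<longleftrightarrow> banica_cond W q"
    unfolding act_commutes_weighted_laplacian_iff
    by (rule weighted_laplacian_rows_iff_banica_cond[OF assms(2)]) (simp_all add: W_def metric)
  finally have "(\<forall>f. laplacian_id \<kappa> d (act q f) = act q (laplacian \<kappa> d f)) \<longleftrightarrow> preserves d q"
    by (simp add: banica_cond_iff_preserves[OF assms(2)] W_preserves)
  moreover have "banica_cond d q \<longleftrightarrow> preserves d q"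
    by (rule banica_cond_iff_preserves[OF assms(2)])
  moreover have "act2 q (dist_fun d) = tens_one (dist_fun d) \<longleftrightarrow> preserves d q"
    unfolding dist_fun_def by (rule act2_invariant_iff_preserves[OF assms(2)])
  moreover have "act2 q (cfun d) = tens_one (cfun d) \<longleftrightarrow> preserves d q"
    unfolding cfun_eq_inverse_square[OF assms(1)] W_preserves[symmetric] W_def[symmetric]
    by (rule act2_invariant_iff_preserves[OF assms(2)])
  ultimately show ?thesis
    by blast
qed

end
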